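(* Let $2\le n\le l$ be integers, let $L_l=\{a_1<\dots<a_l\}$ be the linearly ordered semilattice of $l$ elements, and let $t(X)=s(X)$ be an equation over $L_l$ in the variables $X=\{x_1,\dots,x_n\}$ in which every variable occurs, with $|\mathrm{Var}(t)\setminus\mathrm{Var}(s)|=k_1$ and $|\mathrm{Var}(s)\setminus\mathrm{Var}(t)|=k_2$. Then the number of irreducible components of the solution set $V(t(X)=s(X))\subseteq L_l^n$ equals $(n-k_1-k_2)(n-1)!+k_1k_2(n-2)!$.
   Context: $L_l$ has multiplication $a_ia_j=a_{\min(i,j)}$. A term is a commutative word in $x_1,\dots,x_n$; $\mathrm{Var}(t)$ is the set of variables occurring in $t$. An equation is an ordered pair of terms $t(X)=s(X)$; $P\in L_l^n$ is a solution if $t(P)=s(P)$. For a system $S$ of equations, $V(S)$ is its set of common solutions; $Y\subseteq L_l^n$ is algebraic if $Y=V(S)$ for some system $S$; an algebraic set is irreducible if it is not a proper finite union of other algebraic sets. Every algebraic set is uniquely (up to order) a finite union $Y_1\cup\dots\cup Y_m$ of irreducible algebraic sets with $Y_i\not\subseteq Y_j$ for $i\ne j$; these $Y_i$ are its irreducible components. *)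

theory Defs
  imports Main "HOL-Library.Multiset"
begin

text \<open>The semilattice L_l: element a_i is represented by the natural number i, 1 <= i <= l;
  the product a_i a_j = a_(min i j) is min. Variables x_1..x_n are indices 0..n-1.
  A term is a commutative word, i.e. a nonempty finite multiset of variables.\<close>

definition is_term :: "nat \<Rightarrow> nat multiset \<Rightarrow> bool" where
  "is_term n t \<longleftrightarrow> t \<noteq> {#} \<and> set_mset t \<subseteq> {..<n}"

definition Var :: "nat multiset \<Rightarrow> nat set" where
  "Var t = set_mset t"

definition points :: "nat \<Rightarrow> nat \<Rightarrow> nat list set" where
  "points l n = {P. length P = n \<and> set P \<subseteq> {1..l}}"

definition term_val :: "nat multiset \<Rightarrow> nat list \<Rightarrow> nat" where
  "term_val t P = Min ((\<lambda>i. P ! i) ` set_mset t)"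

definition Vset :: "nat \<Rightarrow> nat \<Rightarrow> (nat multiset \<times> nat multiset) set \<Rightarrow> nat list set" where
  "Vset l n S = {P \<in> points l n. \<forall>(t, s) \<in> S. term_val t P = term_val s P}"

definition algebraic :: "nat \<Rightarrow> nat \<Rightarrow> nat list set \<Rightarrow> bool" where
  "algebraic l n Y \<longleftrightarrow> (\<exists>S. (\<forall>(t, s) \<in> S. is_term n t \<and> is_term n s) \<and> Y = Vset l n S)"

definition irreducible_alg :: "nat \<Rightarrow> nat \<Rightarrow> nat list set \<Rightarrow> bool" where
  "irreducible_alg l n Y \<longleftrightarrow> algebraic l n Y \<and>
     \<not> (\<exists>F. finite F \<and> (\<forall>Z\<in>F. algebraic l n Z \<and> Z \<noteq> Y) \<and> Y = \<Union>F)"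

definition irr_decomposition :: "nat \<Rightarrow> nat \<Rightarrow> nat list set \<Rightarrow> nat list set set \<Rightarrow> bool" where
  "irr_decomposition l n Y C \<longleftrightarrow> finite C \<and> (\<forall>Z\<in>C. irreducible_alg l n Z) \<and> Y = \<Union>C \<and>
     (\<forall>Z1\<in>C. \<forall>Z2\<in>C. Z1 \<subseteq> Z2 \<longrightarrow> Z1 = Z2)"

end

theory Submission
  imports Defs "HOL-Combinatorics.Multiset_Permutations"
begin

text \<open>A map r from variables to ranks determines the total preorder "x below y iff r x \<le> r y";
  its cell consists of the points that are monotone along it.  Cells are algebraic (they are cut
  out by the equations x y = x) and irreducible, because the point with coordinates Suc (r x) is a
  generic point: every algebraic set containing it contains the whole cell.  A solution of t = s
  attains the common value at a variable of t and at a variable of s, so it lies in the cell of a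
  total preorder whose bottom level is either a single variable common to t and s, or a pair of
  variables, one occurring only in t and one only in s, with all other levels singletons.  These
  cells are pairwise incomparable, so they are the irreducible components, and there are
  (n - k1 - k2) (n - 1)! + k1 k2 (n - 2)! of them.\<close>

definition order_cell :: "nat \<Rightarrow> nat \<Rightarrow> (nat \<Rightarrow> nat) \<Rightarrow> nat list set" where
  "order_cell l n r = {P \<in> points l n. \<forall>x<n. \<forall>y<n. r x \<le> r y \<longrightarrow> P!x \<le> P!y}"

definition generic_point :: "nat \<Rightarrow> (nat \<Rightarrow> nat) \<Rightarrow> nat list" where
  "generic_point n r = map (\<lambda>x. Suc (r x)) [0..<n]"

lemma term_val_eqI:
  assumes "c \<in> set_mset t" "\<forall>y\<in>set_mset t. P!c \<le> P!y"
  shows "term_val t P = P!c"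
  unfolding term_val_def using assms by (intro Min_eqI) auto

lemma term_val_le: "y \<in> set_mset t \<Longrightarrow> term_val t P \<le> P!y"
  unfolding term_val_def by (intro Min_le) auto

lemma term_val_attained:
  assumes "t \<noteq> {#}"
  obtains u where "u \<in> set_mset t" "P!u = term_val t P"
proof -
  have "term_val t P \<in> (\<lambda>i. P!i) ` set_mset t"
    unfolding term_val_def using assms by (intro Min_in) auto
  then show ?thesis using that by auto
qed

lemma term_val_eq_if_common_minimum:
  assumes "u \<in> set_mset t" "v \<in> set_mset s" "P!u = P!v"
    and "\<forall>y\<in>set_mset t \<union> set_mset s. P!u \<le> P!y"
  shows "term_val t P = term_val s P"
  using assms term_val_eqI[of u t P] term_val_eqI[of v s P] by simp

lemma term_has_letter_of_min_rank:
  fixes r :: "nat \<Rightarrow> nat"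
  assumes "t \<noteq> {#}"
  obtains x where "x \<in> set_mset t" "\<forall>y\<in>set_mset t. r x \<le> r y"
proof -
  have "Min (r ` set_mset t) \<in> r ` set_mset t" using assms by (intro Min_in) auto
  then obtain x where "x \<in> set_mset t" "r x = Min (r ` set_mset t)" by auto
  then show ?thesis using that by auto
qed

lemma generic_point_in_order_cell:
  "\<forall>x<n. r x < l \<Longrightarrow> generic_point n r \<in> order_cell l n r"
  by (auto simp: order_cell_def generic_point_def points_def Suc_le_eq)

lemma term_val_on_order_cell:
  assumes "is_term n t" "x \<in> set_mset t" "\<forall>y\<in>set_mset t. r x \<le> r y" "P \<in> order_cell l n r"
  shows "term_val t (generic_point n r) = Suc (r x)" "term_val t P = P!x"
proof -
  have t: "set_mset t \<subseteq> {..<n}" using assms(1) by (simp add: is_term_def)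
  then show "term_val t (generic_point n r) = Suc (r x)"
    using assms(2,3) term_val_eqI[of x t "generic_point n r"]
    by (auto simp: generic_point_def subset_iff)
  show "term_val t P = P!x"
    using assms t by (intro term_val_eqI) (auto simp: order_cell_def subset_iff)
qed

text \<open>Each equation of a system is decided on the cell by the variables of minimal rank on
  both sides, and the generic point separates different ranks.\<close>
lemma order_cell_subset_if_generic_point:
  assumes "algebraic l n Z" and "generic_point n r \<in> Z"
  shows "order_cell l n r \<subseteq> Z"
proof
  fix P assume P: "P \<in> order_cell l n r"
  obtain Sy where Sy: "\<forall>(t, s) \<in> Sy. is_term n t \<and> is_term n s" and Z: "Z = Vset l n Sy"
    using assms(1) by (auto simp: algebraic_def)
  have "term_val t P = term_val s P" if ts: "(t, s) \<in> Sy" for t s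
  proof -
    have t: "is_term n t" and s: "is_term n s" using Sy ts by auto
    obtain x where x: "x \<in> set_mset t" "\<forall>y\<in>set_mset t. r x \<le> r y"
      using term_has_letter_of_min_rank t by (auto simp: is_term_def)
    obtain x' where x': "x' \<in> set_mset s" "\<forall>y\<in>set_mset s. r x' \<le> r y"
      using term_has_letter_of_min_rank s by (auto simp: is_term_def)
    have "term_val t (generic_point n r) = term_val s (generic_point n r)"
      using assms(2) Z ts by (auto simp: Vset_def)
    then have "r x = r x'"
      using term_val_on_order_cell(1)[OF t x P] term_val_on_order_cell(1)[OF s x' P] by simp
    moreover have "x < n" "x' < n" using x x' t s by (auto simp: is_term_def)
    ultimately have "P!x = P!x'" using P by (auto simp: order_cell_def intro: antisym)
    then show ?thesis
      using term_val_on_order_cell(2)[OF t x P] term_val_on_order_cell(2)[OF s x' P] by simp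
  qed
  moreover have "P \<in> points l n" using P by (simp add: order_cell_def)
  ultimately show "P \<in> Z" using Z by (auto simp: Vset_def)
qed

lemma algebraic_order_cell: "algebraic l n (order_cell l n r)"
proof -
  let ?S = "{({#x, y#}, {#x#}) | x y. x < n \<and> y < n \<and> r x \<le> r y}"
  have val2: "term_val {#x, y#} P = min (P!x) (P!y)" and val1: "term_val {#x#} P = P!x" for x y P
    by (simp_all add: term_val_def)
  have "order_cell l n r = Vset l n ?S"
  proof (intro set_eqI iffI)
    fix P assume "P \<in> order_cell l n r"
    then show "P \<in> Vset l n ?S" by (auto simp: order_cell_def Vset_def val1 val2 min_def)
  next
    fix P assume P: "P \<in> Vset l n ?S"
    have "P!x \<le> P!y" if "x < n" "y < n" "r x \<le> r y" for x y
    proof -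
      have "({#x, y#}, {#x#}) \<in> ?S" using that by blast
      then have "term_val {#x, y#} P = term_val {#x#} P" using P by (auto simp: Vset_def)
      then show ?thesis by (simp add: val1 val2 min_def split: if_splits)
    qed
    then show "P \<in> order_cell l n r" using P by (auto simp: order_cell_def Vset_def)
  qed
  moreover have "\<forall>(t, s) \<in> ?S. is_term n t \<and> is_term n s" by (auto simp: is_term_def)
  ultimately show ?thesis unfolding algebraic_def by blast
qed

lemma irreducible_order_cell:
  assumes "\<forall>x<n. r x < l"
  shows "irreducible_alg l n (order_cell l n r)"
  unfolding irreducible_alg_def
proof (intro conjI notI)
  show "algebraic l n (order_cell l n r)" by (rule algebraic_order_cell)
  assume "\<exists>F. finite F \<and> (\<forall>Z\<in>F. algebraic l n Z \<and> Z \<noteq> order_cell l n r) \<and> order_cell l n r = \<Union>F"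
  then obtain F where F: "\<forall>Z\<in>F. algebraic l n Z \<and> Z \<noteq> order_cell l n r" "order_cell l n r = \<Union>F"
    by blast
  have "generic_point n r \<in> \<Union>F" using generic_point_in_order_cell[OF assms] F(2) by simp
  then obtain Z where Z: "Z \<in> F" "generic_point n r \<in> Z" by blast
  then have "order_cell l n r \<subseteq> Z" using F(1) by (intro order_cell_subset_if_generic_point) auto
  moreover have "Z \<subseteq> order_cell l n r" unfolding F(2) using Z(1) by (rule Union_upper)
  moreover have "Z \<noteq> order_cell l n r" using F(1) Z(1) by simp
  ultimately show False by simp
qed

lemma order_cell_subset_imp_refines:
  assumes "\<forall>x<n. r x < l" and "order_cell l n r \<subseteq> order_cell l n r'"
  shows "\<forall>x<n. \<forall>y<n. r' x \<le> r' y \<longrightarrow> r x \<le> r y"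
  using generic_point_in_order_cell[OF assms(1)] assms(2)
  by (auto simp: order_cell_def generic_point_def)

lemma algebraic_Int: "algebraic l n Y \<Longrightarrow> algebraic l n Z \<Longrightarrow> algebraic l n (Y \<inter> Z)"
proof -
  assume "algebraic l n Y" "algebraic l n Z"
  then obtain S1 S2 where "\<forall>(t, s) \<in> S1. is_term n t \<and> is_term n s" "Y = Vset l n S1"
    "\<forall>(t, s) \<in> S2. is_term n t \<and> is_term n s" "Z = Vset l n S2" by (auto simp: algebraic_def)
  moreover have "Vset l n S1 \<inter> Vset l n S2 = Vset l n (S1 \<union> S2)" by (auto simp: Vset_def)
  ultimately show ?thesis unfolding algebraic_def by (metis Un_iff)
qed

lemma irreducible_subset_Union:
  assumes "irreducible_alg l n Z" "finite C" "\<forall>W\<in>C. algebraic l n W" "Z \<subseteq> \<Union>C"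
  shows "\<exists>W\<in>C. Z \<subseteq> W"
proof (rule ccontr)
  assume "\<not> ?thesis"
  then have "\<forall>X\<in>(\<lambda>W. Z \<inter> W) ` C. algebraic l n X \<and> X \<noteq> Z"
    using assms algebraic_Int by (auto simp: irreducible_alg_def)
  moreover have "Z = \<Union>((\<lambda>W. Z \<inter> W) ` C)" using assms(4) by auto
  ultimately show False using assms(1,2) unfolding irreducible_alg_def by blast
qed

lemma irr_decomposition_subset:
  assumes "irr_decomposition l n Y C1" "irr_decomposition l n Y C2"
  shows "C1 \<subseteq> C2"
proof
  have covers: "\<exists>W\<in>C'. Z \<subseteq> W"
    if "irr_decomposition l n Y C" "irr_decomposition l n Y C'" "Z \<in> C" for C C' Z
  proof (rule irreducible_subset_Union)
    show "irreducible_alg l n Z" "Z \<subseteq> \<Union>C'"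
      using that by (auto simp: irr_decomposition_def)
    show "finite C'" "\<forall>W\<in>C'. algebraic l n W"
      using that(2) by (auto simp: irr_decomposition_def irreducible_alg_def)
  qed
  fix Z assume Z: "Z \<in> C1"
  obtain W where W: "W \<in> C2" "Z \<subseteq> W" using covers[OF assms Z] by blast
  obtain Z' where "Z' \<in> C1" "W \<subseteq> Z'" using covers[OF assms(2,1) W(1)] by blast
  then have "Z = W" using assms(1) Z W unfolding irr_decomposition_def by blast
  then show "Z \<in> C2" using W by simp
qed

lemma irr_decomposition_unique:
  "irr_decomposition l n Y C1 \<Longrightarrow> irr_decomposition l n Y C2 \<Longrightarrow> C1 = C2"
  using irr_decomposition_subset by blast

fun index_of :: "'a list \<Rightarrow> 'a \<Rightarrow> nat" where
  "index_of [] x = 0"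
| "index_of (y # ys) x = (if x = y then 0 else Suc (index_of ys x))"

lemma index_of_nth: "distinct xs \<Longrightarrow> i < length xs \<Longrightarrow> index_of xs (xs!i) = i"
  by (induction xs arbitrary: i) (auto simp: nth_Cons nth_mem split: nat.splits)

lemma nth_index_of: "x \<in> set xs \<Longrightarrow> xs ! index_of xs x = x"
  by (induction xs) auto

lemma index_of_less_length: "x \<in> set xs \<Longrightarrow> index_of xs x < length xs"
  by (induction xs) auto

lemma index_of_inj: "x \<in> set xs \<Longrightarrow> y \<in> set xs \<Longrightarrow> index_of xs x = index_of xs y \<Longrightarrow> x = y"
  by (metis nth_index_of)

lemma sorted_index_of_mono:
  assumes "sorted (map f xs)" "x \<in> set xs" "y \<in> set xs" "index_of xs x \<le> index_of xs y"
  shows "f x \<le> f y"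
proof -
  have "map f xs ! index_of xs x \<le> map f xs ! index_of xs y"
    using assms by (intro sorted_nth_mono) (auto simp: index_of_less_length)
  then show ?thesis using assms by (simp add: index_of_less_length nth_index_of)
qed

lemma sorted_Cons_sort_key: "\<forall>y\<in>set ys. f h \<le> f y \<Longrightarrow> sorted (map f (h # sort_key f ys))"
  by (simp add: sorted_sort_key)

lemma list_eq_if_index_of_eq:
  assumes "distinct xs" "distinct ys" "set xs = set ys" "\<forall>x\<in>set xs. index_of xs x = index_of ys x"
  shows "xs = ys"
proof (rule nth_equalityI)
  show "length xs = length ys" using assms by (metis distinct_card)
  fix i assume i: "i < length xs"
  have "xs!i \<in> set ys" using i assms by (auto simp: nth_mem)
  moreover have "index_of ys (xs!i) = i" using assms i index_of_nth[of xs i] by (metis nth_mem)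
  ultimately show "xs!i = ys!i" by (metis nth_index_of)
qed

text \<open>Strong induction on the rank: the ranks below a variable are the same in both rankings,
  and without gaps they determine the rank.\<close>
lemma dense_rankings_eq:
  fixes r1 r2 :: "nat \<Rightarrow> nat"
  assumes dense1: "\<forall>x<n. \<forall>w<r1 x. \<exists>y<n. r1 y = w"
    and dense2: "\<forall>x<n. \<forall>w<r2 x. \<exists>y<n. r2 y = w"
    and less_iff: "\<forall>x<n. \<forall>y<n. r1 x < r1 y \<longleftrightarrow> r2 x < r2 y"
  shows "\<forall>x<n. r1 x = r2 x"
proof -
  have "\<forall>x<n. r1 x = v \<longrightarrow> r2 x = v" for v
  proof (induction v rule: less_induct)
    case (less v)
    show ?case
    proof (intro allI impI)
      fix x assume x: "x < n" "r1 x = v"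
      have "v \<le> r2 x"
      proof (cases v)
        case (Suc w)
        then obtain y where "y < n" "r1 y = w" using dense1 x by (metis lessI)
        then show ?thesis using less less_iff x Suc by (metis Suc_leI lessI)
      qed simp
      moreover have "r2 x \<le> v"
      proof (rule ccontr)
        assume "\<not> r2 x \<le> v"
        then obtain z where z: "z < n" "r2 z = v" using dense2 x by (meson not_le)
        then have "r2 z < r2 x" using \<open>\<not> r2 x \<le> v\<close> by simp
        then have "r1 z < v" using less_iff z(1) x by auto
        then have "r2 z = r1 z" using less z(1) by blast
        then show False using z(2) \<open>r1 z < v\<close> by simp
      qed
      ultimately show "r2 x = v" by simp
    qed
  qed
  then show ?thesis by auto
qed

text \<open>A code (None, xs) stands for the linear order listed by xs; a code (Some a, xs) puts
  a on the bottom level together with the head of xs.\<close>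
fun code_rank :: "nat option \<times> nat list \<Rightarrow> nat \<Rightarrow> nat" where
  "code_rank (None, xs) x = index_of xs x"
| "code_rank (Some a, xs) x = (if x = a then 0 else index_of xs x)"

locale variable_split =
  fixes n :: nat and T S :: "nat set"
  assumes T_Un_S: "T \<union> S = {..<n}"
begin

lemma finite_T: "finite T" and finite_S: "finite S"
  using T_Un_S by (metis finite_Un finite_lessThan)+

definition single_bottom_codes :: "(nat option \<times> nat list) set" where
  "single_bottom_codes = (\<lambda>(c, ys). (None, c # ys)) `
     (SIGMA c:T \<inter> S. permutations_of_set ({..<n} - {c}))"

definition tied_bottom_codes :: "(nat option \<times> nat list) set" where
  "tied_bottom_codes = (\<lambda>((a, b), ys). (Some a, b # ys)) `
     Sigma ((T - S) \<times> (S - T)) (\<lambda>(a, b). permutations_of_set ({..<n} - {a, b}))"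

definition component_codes :: "(nat option \<times> nat list) set" where
  "component_codes = single_bottom_codes \<union> tied_bottom_codes"

definition bottom :: "nat option \<times> nat list \<Rightarrow> nat set" where
  "bottom i = {x. x < n \<and> code_rank i x = 0}"

lemma single_bottom_codesE:
  assumes "i \<in> single_bottom_codes"
  obtains c ys where "i = (None, c # ys)" "c \<in> T" "c \<in> S" "c < n"
    "distinct (c # ys)" "set (c # ys) = {..<n}"
proof -
  from assms obtain c ys where c: "c \<in> T" "c \<in> S" and i: "i = (None, c # ys)"
    and ys: "distinct ys" "set ys = {..<n} - {c}"
    unfolding single_bottom_codes_def by (auto simp: permutations_of_set_def)
  moreover have "c < n" using c T_Un_S by blast
  moreover from this have "set (c # ys) = {..<n}" using ys by auto
  ultimately show thesis using that ys by simp
qed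

lemma tied_bottom_codesE:
  assumes "i \<in> tied_bottom_codes"
  obtains a b ys where "i = (Some a, b # ys)" "a \<in> T - S" "b \<in> S - T" "a < n" "b < n"
    "distinct (b # ys)" "set (b # ys) = {..<n} - {a}"
proof -
  from assms obtain a b ys where ab: "a \<in> T - S" "b \<in> S - T" and i: "i = (Some a, b # ys)"
    and ys: "distinct ys" "set ys = {..<n} - {a, b}"
    unfolding tied_bottom_codes_def by (auto simp: permutations_of_set_def)
  moreover have "a < n" "b < n" "a \<noteq> b" using ab T_Un_S by blast+
  moreover from this have "set (b # ys) = {..<n} - {a}" using ys by auto
  ultimately show thesis using that ys by simp
qed

lemma bottom_single: "c < n \<Longrightarrow> bottom (None, c # ys) = {c}"
  by (auto simp: bottom_def)

lemma bottom_tied: "a < n \<Longrightarrow> b < n \<Longrightarrow> bottom (Some a, b # ys) = {a, b}"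
  by (auto simp: bottom_def)

lemma component_codesE:
  assumes "i \<in> component_codes"
  obtains "distinct (snd i)" "set (snd i) = {..<n} - set_option (fst i)"
    "\<forall>x\<in>set (snd i). code_rank i x = index_of (snd i) x"
    "\<forall>x<n. x \<notin> set (snd i) \<longrightarrow> code_rank i x = 0"
  using assms unfolding component_codes_def
proof (elim UnE single_bottom_codesE tied_bottom_codesE)
  fix c ys assume "i = (None, c # ys)" "distinct (c # ys)" "set (c # ys) = {..<n}"
  then show thesis by (intro that) simp_all
next
  fix a b ys assume "i = (Some a, b # ys)" "distinct (b # ys)" "set (b # ys) = {..<n} - {a}"
  then show thesis by (intro that) auto
qed

lemma bottom_cases:
  assumes "i \<in> component_codes"
  obtains c where "bottom i = {c}" "c \<in> T" "c \<in> S"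
  | a b where "bottom i = {a, b}" "a \<in> T - S" "b \<in> S - T"
  using assms unfolding component_codes_def
  by (elim UnE single_bottom_codesE tied_bottom_codesE) (auto simp: bottom_single bottom_tied)

lemma code_rank_less:
  assumes "i \<in> component_codes" "x < n"
  shows "code_rank i x < n"
proof (rule component_codesE[OF assms(1)])
  assume "distinct (snd i)" "set (snd i) = {..<n} - set_option (fst i)"
    "\<forall>x\<in>set (snd i). code_rank i x = index_of (snd i) x" "\<forall>x<n. x \<notin> set (snd i) \<longrightarrow> code_rank i x = 0"
  moreover from this have "length (snd i) \<le> n"
    by (metis distinct_card card_mono finite_lessThan Diff_subset card_lessThan)
  ultimately show ?thesis using assms(2) index_of_less_length[of x "snd i"] by fastforce
qed

lemma code_rank_dense:
  assumes "i \<in> component_codes" "x < n" "w < code_rank i x"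
  shows "\<exists>y<n. code_rank i y = w"
proof (rule component_codesE[OF assms(1)])
  assume codes: "set (snd i) = {..<n} - set_option (fst i)" "distinct (snd i)"
    "\<forall>x\<in>set (snd i). code_rank i x = index_of (snd i) x" "\<forall>x<n. x \<notin> set (snd i) \<longrightarrow> code_rank i x = 0"
  then have "x \<in> set (snd i)" using assms by auto
  then have w: "w < length (snd i)" using codes assms index_of_less_length[of x "snd i"] by auto
  then have y: "snd i ! w \<in> set (snd i)" by simp
  then have "snd i ! w < n" using codes(1) by auto
  moreover have "code_rank i (snd i ! w) = w" using y codes(3) index_of_nth[OF codes(2) w] by simp
  ultimately show ?thesis by blast
qed

lemma code_rank_eq_imp_bottom:
  assumes "i \<in> component_codes" "x < n" "y < n" "code_rank i x = code_rank i y" "x \<noteq> y"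
  shows "x \<in> bottom i" "y \<in> bottom i"
proof -
  have "code_rank i x = 0"
  proof (rule component_codesE[OF assms(1)])
    assume "\<forall>x\<in>set (snd i). code_rank i x = index_of (snd i) x"
      "\<forall>x<n. x \<notin> set (snd i) \<longrightarrow> code_rank i x = 0"
    then show ?thesis using assms index_of_inj[of x "snd i" y] by metis
  qed
  then show "x \<in> bottom i" "y \<in> bottom i" using assms by (auto simp: bottom_def)
qed

lemma bottom_eq_if_subset:
  assumes "i \<in> component_codes" "j \<in> component_codes" "bottom j \<subseteq> bottom i"
  shows "bottom i = bottom j"
  using assms(3) by (cases rule: bottom_cases[OF assms(1)]; cases rule: bottom_cases[OF assms(2)]) auto

lemma fst_component_code:
  assumes "i \<in> component_codes"
  shows "fst i = (if bottom i \<subseteq> S then None else Some (THE a. a \<in> bottom i - S))"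
  using assms unfolding component_codes_def
proof (elim UnE single_bottom_codesE tied_bottom_codesE)
  fix a b ys assume "i = (Some a, b # ys)" "a \<in> T - S" "b \<in> S - T" "a < n" "b < n"
  moreover from this have "bottom i - S = {a}" using bottom_tied by auto
  ultimately show ?thesis by auto
qed (simp add: bottom_single)

lemma component_code_eqI:
  assumes i: "i \<in> component_codes" and j: "j \<in> component_codes"
    and rank_eq: "\<forall>x<n. code_rank i x = code_rank j x"
  shows "i = j"
proof (rule prod_eqI)
  have "bottom i = bottom j" using rank_eq by (auto simp: bottom_def)
  then show fst_eq: "fst i = fst j" using fst_component_code[OF i] fst_component_code[OF j] by simp
  show "snd i = snd j"
  proof (rule component_codesE[OF i], rule component_codesE[OF j], rule list_eq_if_index_of_eq)
    assume "set (snd i) = {..<n} - set_option (fst i)" "set (snd j) = {..<n} - set_option (fst j)"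
      "\<forall>x\<in>set (snd i). code_rank i x = index_of (snd i) x"
      "\<forall>x\<in>set (snd j). code_rank j x = index_of (snd j) x"
    then show "set (snd i) = set (snd j)" "\<forall>x\<in>set (snd i). index_of (snd i) x = index_of (snd j) x"
      using fst_eq rank_eq by auto
  qed
qed

text \<open>A refinement keeps the bottom level, whose shape is rigid, hence it has the same ties and
  so the same strict order.\<close>
lemma component_code_eq_if_refines:
  assumes i: "i \<in> component_codes" and j: "j \<in> component_codes"
    and refines: "\<forall>x<n. \<forall>y<n. code_rank j x \<le> code_rank j y \<longrightarrow> code_rank i x \<le> code_rank i y"
  shows "i = j"
proof -
  have "bottom j \<subseteq> bottom i"
  proof
    fix x assume x: "x \<in> bottom j"
    obtain c where c: "c \<in> bottom i" by (rule bottom_cases[OF i]) auto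
    have "x < n" "c < n" "code_rank j x = 0" using x c by (auto simp: bottom_def)
    then have "code_rank i x \<le> code_rank i c" using refines by simp
    then show "x \<in> bottom i" using \<open>x < n\<close> c by (auto simp: bottom_def)
  qed
  then have same_bottom: "bottom i = bottom j" by (rule bottom_eq_if_subset[OF i j])
  have same_ties: "code_rank j x = code_rank j y"
    if "x < n" "y < n" "code_rank i x = code_rank i y" for x y
  proof (cases "x = y")
    case False
    then have "x \<in> bottom j" "y \<in> bottom j"
      using code_rank_eq_imp_bottom[OF i that False] same_bottom by auto
    then show ?thesis by (simp add: bottom_def)
  qed simp
  have "\<forall>x<n. \<forall>y<n. code_rank i x < code_rank i y \<longleftrightarrow> code_rank j x < code_rank j y"
  proof (intro allI impI iffI)
    fix x y assume xy: "x < n" "y < n" "code_rank i x < code_rank i y"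
    show "code_rank j x < code_rank j y"
    proof (rule ccontr)
      assume "\<not> code_rank j x < code_rank j y"
      then have "code_rank i y \<le> code_rank i x" using refines xy(1,2) by simp
      then show False using xy(3) by simp
    qed
  next
    fix x y assume xy: "x < n" "y < n" "code_rank j x < code_rank j y"
    then have "code_rank i x \<le> code_rank i y" using refines by simp
    moreover have "code_rank i x \<noteq> code_rank i y" using same_ties[OF xy(1,2)] xy(3) by auto
    ultimately show "code_rank i x < code_rank i y" by simp
  qed
  then have "\<forall>x<n. code_rank i x = code_rank j x"
    using code_rank_dense[OF i] code_rank_dense[OF j] by (intro dense_rankings_eq) auto
  then show ?thesis by (rule component_code_eqI[OF i j])
qed

lemma order_cell_code_subset_imp_eq:
  assumes "n \<le> l" "i \<in> component_codes" "j \<in> component_codes"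
    and "order_cell l n (code_rank i) \<subseteq> order_cell l n (code_rank j)"
  shows "i = j"
proof (rule component_code_eq_if_refines[OF assms(2,3)])
  have "\<forall>x<n. code_rank i x < l" using code_rank_less[OF assms(2)] assms(1) by fastforce
  then show "\<forall>x<n. \<forall>y<n. code_rank j x \<le> code_rank j y \<longrightarrow> code_rank i x \<le> code_rank i y"
    using assms(4) by (rule order_cell_subset_imp_refines)
qed

lemma bottom_meets_T_and_S:
  assumes "i \<in> component_codes"
  obtains u v where "u \<in> bottom i" "v \<in> bottom i" "u \<in> T" "v \<in> S"
proof (rule bottom_cases[OF assms])
  fix c assume "bottom i = {c}" "c \<in> T" "c \<in> S"
  then show thesis using that[of c c] by simp
next
  fix a b assume "bottom i = {a, b}" "a \<in> T - S" "b \<in> S - T"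
  then show thesis using that[of a b] by simp
qed

lemma order_cell_code_subset_solutions:
  assumes "i \<in> component_codes" "T = set_mset t" "S = set_mset s"
  shows "order_cell l n (code_rank i) \<subseteq> Vset l n {(t, s)}"
proof
  fix P assume P: "P \<in> order_cell l n (code_rank i)"
  obtain u v where uv: "u \<in> bottom i" "v \<in> bottom i" "u \<in> T" "v \<in> S"
    by (rule bottom_meets_T_and_S[OF assms(1)])
  have below: "P!w \<le> P!y" if "w \<in> bottom i" "y < n" for w y
    using P that by (simp add: order_cell_def bottom_def)
  have "u < n" "v < n" using uv(1,2) by (simp_all add: bottom_def)
  then have "P!u = P!v" using below[OF uv(1)] below[OF uv(2)] by (simp add: antisym)
  moreover have "\<forall>y\<in>set_mset t \<union> set_mset s. P!u \<le> P!y"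
    using below[OF uv(1)] assms(2,3) T_Un_S by blast
  ultimately have "term_val t P = term_val s P"
    using uv(3,4) assms(2,3) by (intro term_val_eq_if_common_minimum[of u t v s P]) simp_all
  then show "P \<in> Vset l n {(t, s)}" using P by (simp add: Vset_def order_cell_def)
qed

lemma point_in_single_bottom_cell:
  assumes "c \<in> T" "c \<in> S" "P \<in> points l n" "\<forall>y<n. P!c \<le> P!y"
  shows "\<exists>i\<in>single_bottom_codes. P \<in> order_cell l n (code_rank i)"
proof
  define ys where "ys = sort_key (\<lambda>x. P!x) (filter (\<lambda>x. x \<noteq> c) [0..<n])"
  have "c < n" using assms(1) T_Un_S by blast
  then have set_cys: "set (c # ys) = {..<n}" by (auto simp: ys_def)
  have "ys \<in> permutations_of_set ({..<n} - {c})" by (auto simp: ys_def permutations_of_set_def)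
  then show "(None, c # ys) \<in> single_bottom_codes"
    unfolding single_bottom_codes_def using assms(1,2) by (intro image_eqI[where x = "(c, ys)"]) auto
  have sorted: "sorted (map (\<lambda>x. P!x) (c # ys))"
    using assms(4) unfolding ys_def by (intro sorted_Cons_sort_key) auto
  show "P \<in> order_cell l n (code_rank (None, c # ys))"
    unfolding order_cell_def
  proof (intro CollectI conjI assms(3) allI impI)
    fix x y assume "x < n" "y < n" "code_rank (None, c # ys) x \<le> code_rank (None, c # ys) y"
    then show "P!x \<le> P!y" using set_cys sorted_index_of_mono[OF sorted] by simp
  qed
qed

lemma point_in_tied_bottom_cell:
  assumes "a \<in> T - S" "b \<in> S - T" "P \<in> points l n" "P!a = P!b" "\<forall>y<n. P!a \<le> P!y"
  shows "\<exists>i\<in>tied_bottom_codes. P \<in> order_cell l n (code_rank i)"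
proof
  define ys where "ys = sort_key (\<lambda>x. P!x) (filter (\<lambda>x. x \<noteq> a \<and> x \<noteq> b) [0..<n])"
  have "a < n" "b < n" "a \<noteq> b" using assms(1,2) T_Un_S by blast+
  then have set_bys: "set (b # ys) = {..<n} - {a}" by (auto simp: ys_def)
  have "ys \<in> permutations_of_set ({..<n} - {a, b})" by (auto simp: ys_def permutations_of_set_def)
  then show "(Some a, b # ys) \<in> tied_bottom_codes"
    unfolding tied_bottom_codes_def using assms(1,2) by (intro image_eqI[where x = "((a, b), ys)"]) auto
  have sorted: "sorted (map (\<lambda>x. P!x) (b # ys))"
    using assms(4,5) unfolding ys_def by (intro sorted_Cons_sort_key) auto
  show "P \<in> order_cell l n (code_rank (Some a, b # ys))"
    unfolding order_cell_def
  proof (intro CollectI conjI assms(3) allI impI)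
    fix x y assume xy: "x < n" "y < n" "code_rank (Some a, b # ys) x \<le> code_rank (Some a, b # ys) y"
    consider "x = a" | "x \<noteq> a" "y = a" | "x \<noteq> a" "y \<noteq> a" by blast
    then show "P!x \<le> P!y"
    proof cases
      case 2
      then have "x = b" using xy(3) by (simp split: if_splits)
      then show ?thesis using 2 assms(4) by simp
    next
      case 3
      then show ?thesis using xy set_bys sorted_index_of_mono[OF sorted] by simp
    qed (use assms(5) xy in simp)
  qed
qed

lemma solutions_subset_order_cells:
  assumes "T = set_mset t" "S = set_mset s" "t \<noteq> {#}" "s \<noteq> {#}"
  shows "Vset l n {(t, s)} \<subseteq> (\<Union>i\<in>component_codes. order_cell l n (code_rank i))"
proof
  fix P assume "P \<in> Vset l n {(t, s)}"
  then have P: "P \<in> points l n" and eq: "term_val t P = term_val s P" by (auto simp: Vset_def)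
  obtain u where u: "u \<in> T" "P!u = term_val t P" using term_val_attained[OF assms(3)] assms(1) by metis
  obtain v where v: "v \<in> S" "P!v = term_val t P" using term_val_attained[OF assms(4)] assms(2) eq by metis
  have min: "term_val t P \<le> P!y" if "y < n" for y
    using that T_Un_S term_val_le[of y t P] term_val_le[of y s P] assms(1,2) eq by auto
  show "P \<in> (\<Union>i\<in>component_codes. order_cell l n (code_rank i))"
  proof (cases "\<exists>c\<in>T \<inter> S. P!c = term_val t P")
    case True
    then obtain c where "c \<in> T" "c \<in> S" "P!c = term_val t P" by blast
    then show ?thesis
      using point_in_single_bottom_cell[of c P] P min by (auto simp: component_codes_def)
  next
    case False
    then have "u \<in> T - S" "v \<in> S - T" using u v by auto
    then show ?thesis
      using point_in_tied_bottom_cell[of u v P] P u v min by (auto simp: component_codes_def)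
  qed
qed

lemma irr_decomposition_solutions:
  assumes "n \<le> l" "T = set_mset t" "S = set_mset s" "t \<noteq> {#}" "s \<noteq> {#}"
  shows "irr_decomposition l n (Vset l n {(t, s)}) ((\<lambda>i. order_cell l n (code_rank i)) ` component_codes)"
  unfolding irr_decomposition_def
proof (intro conjI ballI impI)
  show "finite ((\<lambda>i. order_cell l n (code_rank i)) ` component_codes)"
    using finite_T finite_S
    by (simp add: component_codes_def single_bottom_codes_def tied_bottom_codes_def split_def)
  show "irreducible_alg l n Z" if "Z \<in> (\<lambda>i. order_cell l n (code_rank i)) ` component_codes" for Z
    using that code_rank_less assms(1) by (force intro: irreducible_order_cell)
  show "Vset l n {(t, s)} = \<Union>((\<lambda>i. order_cell l n (code_rank i)) ` component_codes)"
    using solutions_subset_order_cells[OF assms(2-5)] order_cell_code_subset_solutions[OF _ assms(2,3)]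
    by blast
qed (use order_cell_code_subset_imp_eq[OF assms(1)] in blast)

lemma card_single_bottom_codes: "card single_bottom_codes = card (T \<inter> S) * fact (n - 1)"
proof -
  have "card single_bottom_codes = card (SIGMA c:T \<inter> S. permutations_of_set ({..<n} - {c}))"
    unfolding single_bottom_codes_def by (rule card_image) (auto simp: inj_on_def)
  also have "\<dots> = (\<Sum>c\<in>T \<inter> S. card (permutations_of_set ({..<n} - {c})))"
    using finite_T by simp
  also have "\<dots> = (\<Sum>c\<in>T \<inter> S. fact (n - 1))"
  proof (rule sum.cong[OF refl])
    fix c assume "c \<in> T \<inter> S"
    then have "c < n" using T_Un_S by blast
    then show "card (permutations_of_set ({..<n} - {c})) = fact (n - 1)" by simp
  qed
  finally show ?thesis by simp
qed

lemma card_tied_bottom_codes: "card tied_bottom_codes = card (T - S) * card (S - T) * fact (n - 2)"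
proof -
  let ?perms = "\<lambda>(a, b). permutations_of_set ({..<n} - {a, b})"
  have "card tied_bottom_codes = card (Sigma ((T - S) \<times> (S - T)) ?perms)"
    unfolding tied_bottom_codes_def by (rule card_image) (auto simp: inj_on_def)
  also have "\<dots> = (\<Sum>p\<in>(T - S) \<times> (S - T). card (?perms p))"
    using finite_T finite_S by (simp add: split_def)
  also have "\<dots> = (\<Sum>p\<in>(T - S) \<times> (S - T). fact (n - 2))"
  proof (rule sum.cong[OF refl])
    fix p assume "p \<in> (T - S) \<times> (S - T)"
    then obtain a b where p: "p = (a, b)" "a \<in> T - S" "b \<in> S - T" by blast
    have "a < n" "b < n" "a \<noteq> b" using p(2,3) T_Un_S by blast+
    then have "card ({..<n} - {a, b}) = n - 2" by (simp add: card_Diff_subset)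
    then show "card (?perms p) = fact (n - 2)" using p(1) by simp
  qed
  finally show ?thesis by (simp add: card_cartesian_product)
qed

lemma card_component_codes:
  "card component_codes = card (T \<inter> S) * fact (n - 1) + card (T - S) * card (S - T) * fact (n - 2)"
proof -
  have "single_bottom_codes \<inter> tied_bottom_codes = {}"
    by (auto simp: single_bottom_codes_def tied_bottom_codes_def)
  moreover have "finite single_bottom_codes" "finite tied_bottom_codes"
    using finite_T finite_S by (simp_all add: single_bottom_codes_def tied_bottom_codes_def split_def)
  ultimately show ?thesis
    by (simp add: component_codes_def card_Un_disjoint card_single_bottom_codes card_tied_bottom_codes)
qed

lemma card_Int_eq: "card (T \<inter> S) = n - card (T - S) - card (S - T)"
proof -
  have "{..<n} = ((T - S) \<union> (S - T)) \<union> (T \<inter> S)" using T_Un_S by auto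
  then have "n = card (((T - S) \<union> (S - T)) \<union> (T \<inter> S))" by (metis card_lessThan)
  also have "\<dots> = card ((T - S) \<union> (S - T)) + card (T \<inter> S)"
    by (rule card_Un_disjoint) (use finite_T finite_S in auto)
  also have "card ((T - S) \<union> (S - T)) = card (T - S) + card (S - T)"
    by (rule card_Un_disjoint) (use finite_T finite_S in auto)
  finally show ?thesis by simp
qed

end

theorem mainTheorem5:
  fixes l n k1 k2 :: nat and t s :: "nat multiset"
  assumes "2 \<le> n" and "n \<le> l"
    and "is_term n t" and "is_term n s"
    and "Var t \<union> Var s = {..<n}"
    and "card (Var t - Var s) = k1" and "card (Var s - Var t) = k2"
  shows "(\<exists>C. irr_decomposition l n (Vset l n {(t, s)}) C) \<and>
         (\<forall>C. irr_decomposition l n (Vset l n {(t, s)}) C \<longrightarrow>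
              card C = (n - k1 - k2) * fact (n - 1) + k1 * k2 * fact (n - 2))"
proof -
  interpret variable_split n "Var t" "Var s" using assms(5) by unfold_locales
  have terms: "Var t = set_mset t" "Var s = set_mset s" "t \<noteq> {#}" "s \<noteq> {#}"
    using assms(3,4) by (auto simp: Var_def is_term_def)
  let ?C = "(\<lambda>i. order_cell l n (code_rank i)) ` component_codes"
  have decomposition: "irr_decomposition l n (Vset l n {(t, s)}) ?C"
    using irr_decomposition_solutions[OF assms(2) terms] .
  have "card ?C = card component_codes"
    by (rule card_image, rule inj_onI) (use order_cell_code_subset_imp_eq[OF assms(2)] in blast)
  also have "\<dots> = (n - k1 - k2) * fact (n - 1) + k1 * k2 * fact (n - 2)"
    using card_component_codes card_Int_eq assms(6,7) by simp
  finally show ?thesis using decomposition irr_decomposition_unique by blast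
qed

end
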